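(* Fix a positive integer $c$. Let $\mathcal{H}_c$ be the graph whose vertex set consists of every nonempty Hilbert scheme $\mathrm{Hilb}^P(\mathbb{P}^n)$ parametrizing codimension $c$ subschemes of some projective space $\mathbb{P}^n$ (i.e. $P$ admissible and $n=c+\deg P$), and whose edges are all pairs $(\mathrm{Hilb}^P(\mathbb{P}^n),\mathrm{Hilb}^{\sigma(P)}(\mathbb{P}^n))$ and $(\mathrm{Hilb}^P(\mathbb{P}^n),\mathrm{Hilb}^{\lambda(P)}(\mathbb{P}^{n+1}))$ where $P$ is admissible and $n:=c+\deg P$. Then $\mathcal{H}_c$ is an infinite binary tree, with root $\mathrm{Hilb}^1(\mathbb{P}^c)$.
   Context: $\Bbbk$ is an algebraically closed field and $\mathrm{Hilb}^P(\mathbb{P}^n)$ is the Hilbert scheme parametrizing closed subschemes of $\mathbb{P}^n_\Bbbk$ with Hilbert polynomial $P$ (Hilbert schemes for distinct pairs $(n,P)$ are regarded as distinct vertices). Binomial coefficients are polynomials: $\binom{t+a}{b}=\frac{(t+a)\cdots(t+a-b+1)}{b!}$ for $b\ge0$, $0$ for $b<0$. An admissible Hilbert polynomial is the Hilbert polynomial of a nonempty closed subscheme of some projective space; each has a unique Gotzmann expression $P(t)=\sum_{j=1}^r\binom{t+b_j-(j-1)}{b_j}$ with $b_1\ge\dots\ge b_r\ge 0$. $\sigma(P):=1+P$ and $\lambda(P)$ is the admissible polynomial with Gotzmann expression $\sum_{j=1}^r\binom{t+b_j+1-(j-1)}{b_j+1}$. *)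

theory Defs
  imports "HOL-Computational_Algebra.Polynomial"
begin

text \<open>binom_poly a b is the polynomial in t given by binom(t+a, b) = (t+a)(t+a-1)...(t+a-b+1)/b!
  (b is a natural number, so the case b < 0 does not arise).\<close>
definition binom_poly :: "int \<Rightarrow> nat \<Rightarrow> rat poly" where
  "binom_poly a b = smult (1 / fact b) (\<Prod>i<b. [:of_int a - of_nat i, 1:])"

text \<open>The polynomial sum over j=1..r of binom(t + b_j - (j-1), b_j); with 0-based list index j
  the shift is b_j - j.\<close>
definition gotzmann_poly :: "nat list \<Rightarrow> rat poly" where
  "gotzmann_poly bs = (\<Sum>j<length bs. binom_poly (int (bs ! j) - int j) (bs ! j))"

definition is_gotzmann_expr :: "nat list \<Rightarrow> rat poly \<Rightarrow> bool" where
  "is_gotzmann_expr bs P \<longleftrightarrow> bs \<noteq> [] \<and> sorted_wrt (\<ge>) bs \<and> P = gotzmann_poly bs"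

definition admissible :: "rat poly \<Rightarrow> bool" where
  "admissible P \<longleftrightarrow> (\<exists>bs. is_gotzmann_expr bs P)"

definition sigma_hp :: "rat poly \<Rightarrow> rat poly" where
  "sigma_hp P = 1 + P"

definition lambda_hp :: "rat poly \<Rightarrow> rat poly" where
  "lambda_hp P = gotzmann_poly (map Suc (THE bs. is_gotzmann_expr bs P))"

text \<open>A vertex Hilb^P(P^n) is represented by the pair (n, P).\<close>
definition H_vertices :: "nat \<Rightarrow> (nat \<times> rat poly) set" where
  "H_vertices c = {(n, P). admissible P \<and> n = c + degree P}"

definition H_edges :: "nat \<Rightarrow> (nat \<times> rat poly) set set" where
  "H_edges c =
     {{(n, P), (n, sigma_hp P)} | n P. admissible P \<and> n = c + degree P} \<union>
     {{(n, P), (n + 1, lambda_hp P)} | n P. admissible P \<and> n = c + degree P}"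

definition is_graph :: "'a set \<Rightarrow> 'a set set \<Rightarrow> bool" where
  "is_graph V E \<longleftrightarrow> (\<forall>e\<in>E. e \<subseteq> V \<and> card e = 2)"

definition adj :: "'a set set \<Rightarrow> 'a \<Rightarrow> 'a \<Rightarrow> bool" where
  "adj E u v \<longleftrightarrow> {u, v} \<in> E"

definition neighbours :: "'a set set \<Rightarrow> 'a \<Rightarrow> 'a set" where
  "neighbours E v = {w. adj E v w}"

definition is_walk :: "'a set set \<Rightarrow> 'a list \<Rightarrow> bool" where
  "is_walk E xs \<longleftrightarrow> xs \<noteq> [] \<and> (\<forall>i. Suc i < length xs \<longrightarrow> adj E (xs ! i) (xs ! Suc i))"

definition connected_graph :: "'a set \<Rightarrow> 'a set set \<Rightarrow> bool" where
  "connected_graph V E \<longleftrightarrow> V \<noteq> {} \<and>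
     (\<forall>u\<in>V. \<forall>v\<in>V. \<exists>xs. is_walk E xs \<and> hd xs = u \<and> last xs = v)"

definition is_cycle :: "'a set set \<Rightarrow> 'a list \<Rightarrow> bool" where
  "is_cycle E xs \<longleftrightarrow> length xs \<ge> 3 \<and> distinct xs \<and> is_walk E xs \<and> adj E (last xs) (hd xs)"

definition is_tree :: "'a set \<Rightarrow> 'a set set \<Rightarrow> bool" where
  "is_tree V E \<longleftrightarrow> is_graph V E \<and> connected_graph V E \<and> (\<nexists>xs. is_cycle E xs)"

text \<open>An infinite (full) binary tree rooted at r: an infinite tree in which the root has exactly
  two neighbours (its two children) and every other vertex exactly three (its parent and two children).\<close>
definition infinite_binary_tree :: "'a set \<Rightarrow> 'a set set \<Rightarrow> 'a \<Rightarrow> bool" where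
  "infinite_binary_tree V E r \<longleftrightarrow> is_tree V E \<and> infinite V \<and> r \<in> V \<and>
     card (neighbours E r) = 2 \<and> (\<forall>v\<in>V - {r}. card (neighbours E v) = 3)"

end

theory Submission
  imports Defs
begin

(* Gotzmann expressions are unique: the degree of a Gotzmann sum is b_1, and its leading
   coefficient is positive, so b_1 can be read off and the rest peeled away. Hence the vertices
   of H_c correspond bijectively to the nonincreasing nonempty lists (b_1, ..., b_r) of naturals,
   via Hilb^P(P^n) with n = c + b_1. On these lists sigma appends a 0 and lambda adds 1 to every
   entry: both maps are injective, their images are disjoint and miss [0] (i.e. P = 1), and every
   other list is the image of exactly one list (of its front if it ends in 0, of its entrywise
   predecessor otherwise). As b_1 + r grows by one along both maps, the graph is the free binary
   tree generated from [0] by the two maps. *)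

lemma adj_commute: "adj E u v \<longleftrightarrow> adj E v u"
  by (simp add: adj_def insert_commute)

lemma is_walk_iff_successively: "is_walk E xs \<longleftrightarrow> xs \<noteq> [] \<and> successively (adj E) xs"
  by (simp add: is_walk_def successively_conv_nth)

lemma is_walk_snoc: "is_walk E xs \<Longrightarrow> adj E (last xs) y \<Longrightarrow> is_walk E (xs @ [y])"
  by (simp add: is_walk_iff_successively successively_append_iff)

lemma is_walk_rev: "is_walk E xs \<Longrightarrow> is_walk E (rev xs)"
  by (simp add: is_walk_iff_successively adj_commute[of E])

lemma is_walk_between_ends:
  assumes "is_walk E xs" "is_walk E ys" "hd xs = hd ys"
  obtains zs where "is_walk E zs" "hd zs = last xs" "last zs = last ys"
proof (cases ys)
  case (Cons y ys')
  have "is_walk E (rev xs @ ys')"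
    using assms Cons
    by (auto simp: is_walk_iff_successively successively_append_iff successively_Cons
        adj_commute[of E] last_rev)
  moreover have "hd (rev xs @ ys') = last xs"
    using assms(1) by (simp add: is_walk_def hd_rev)
  moreover have "last (rev xs @ ys') = last ys"
    using assms Cons by (auto simp: is_walk_def last_rev)
  ultimately show thesis
    by (rule that)
qed (use assms in \<open>simp add: is_walk_def\<close>)

lemma is_cycle_rotate1:
  assumes "is_cycle E xs"
  shows "is_cycle E (rotate1 xs)"
proof -
  have "length xs \<ge> 3"
    using assms by (simp add: is_cycle_def)
  then obtain x ys where xs: "xs = x # ys" and "ys \<noteq> []"
    by (auto simp: numeral_3_eq_3 Suc_le_length_iff)
  moreover have "successively (adj E) (x # ys)" "adj E (last xs) x"
    using assms by (simp_all add: is_cycle_def is_walk_iff_successively xs)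
  ultimately have "successively (adj E) (ys @ [x])" "adj E x (hd ys)"
    by (simp_all add: successively_append_iff successively_Cons)
  then show ?thesis
    using assms \<open>ys \<noteq> []\<close> by (simp add: is_cycle_def is_walk_iff_successively xs)
qed

lemma is_cycle_rotate: "is_cycle E xs \<Longrightarrow> is_cycle E (rotate n xs)"
  by (induction n) (simp_all add: is_cycle_rotate1)

lemma is_cycle_two_neighbours:
  assumes "is_cycle E xs" "x \<in> set xs"
  obtains y z where "y \<in> set xs" "z \<in> set xs" "y \<noteq> z" "adj E x y" "adj E x z"
proof -
  obtain m where m: "m < length xs" "xs ! m = x"
    using assms(2) by (auto simp: in_set_conv_nth)
  define ys where "ys = rotate m xs"
  have cyc: "is_cycle E ys" and set: "set ys = set xs"
    using assms(1) by (simp_all add: ys_def is_cycle_rotate)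
  have hd: "hd ys = x"
    using m unfolding ys_def by (subst hd_rotate_conv_nth) auto
  have "length ys \<ge> 3"
    using cyc by (simp add: is_cycle_def)
  then obtain y z zs where ys: "ys = x # y # z # zs"
    using hd by (auto simp: numeral_3_eq_3 Suc_le_length_iff)
  have "y \<noteq> last (z # zs)"
    using cyc by (auto simp: ys is_cycle_def)
  moreover have "adj E x y" "adj E x (last (z # zs))"
    using cyc by (auto simp: ys is_cycle_def is_walk_iff_successively adj_commute[of E _ x])
  moreover have "y \<in> set xs" "last (z # zs) \<in> set xs"
    using set last_in_set[of "z # zs"] by (auto simp: ys simp del: last.simps)
  ultimately show thesis
    using that by blast
qed

definition binary_edges :: "'a set \<Rightarrow> ('a \<Rightarrow> 'a) \<Rightarrow> ('a \<Rightarrow> 'a) \<Rightarrow> 'a set set" where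
  "binary_edges V s t = {{v, s v} | v. v \<in> V} \<union> {{v, t v} | v. v \<in> V}"

(* The rank makes every vertex descend from r in finitely many steps. *)
locale free_binary_generation =
  fixes V :: "'a set" and r :: 'a and s t :: "'a \<Rightarrow> 'a" and rank :: "'a \<Rightarrow> nat"
  assumes root_in: "r \<in> V"
    and s_in: "v \<in> V \<Longrightarrow> s v \<in> V"
    and t_in: "v \<in> V \<Longrightarrow> t v \<in> V"
    and inj_s: "inj_on s V"
    and inj_t: "inj_on t V"
    and s_neq_t: "v \<in> V \<Longrightarrow> w \<in> V \<Longrightarrow> s v \<noteq> t w"
    and s_neq_root: "v \<in> V \<Longrightarrow> s v \<noteq> r"
    and t_neq_root: "v \<in> V \<Longrightarrow> t v \<noteq> r"
    and has_parent: "w \<in> V \<Longrightarrow> w \<noteq> r \<Longrightarrow> \<exists>v\<in>V. w = s v \<or> w = t v"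
    and rank_s: "v \<in> V \<Longrightarrow> rank (s v) = Suc (rank v)"
    and rank_t: "v \<in> V \<Longrightarrow> rank (t v) = Suc (rank v)"
begin

abbreviation edges :: "'a set set" where
  "edges \<equiv> binary_edges V s t"

definition child :: "'a \<Rightarrow> 'a \<Rightarrow> bool" where
  "child v w \<longleftrightarrow> v \<in> V \<and> (w = s v \<or> w = t v)"

lemma adj_edges_iff: "adj edges u w \<longleftrightarrow> child u w \<or> child w u"
  by (auto simp: adj_def binary_edges_def child_def doubleton_eq_iff)

lemma child_in: "child v w \<Longrightarrow> v \<in> V \<and> w \<in> V"
  by (auto simp: child_def s_in t_in)

lemma rank_child: "child v w \<Longrightarrow> rank w = Suc (rank v)"
  by (auto simp: child_def rank_s rank_t)

lemma parent_unique: "child v w \<Longrightarrow> child v' w \<Longrightarrow> v = v'"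
  using inj_s inj_t s_neq_t by (fastforce simp: child_def dest: inj_onD)

lemma parent_exists:
  assumes "w \<in> V" "w \<noteq> r"
  obtains v where "child v w"
  using has_parent[OF assms] by (auto simp: child_def)

lemma root_not_child: "\<not> child v r"
  using s_neq_root t_neq_root by (auto simp: child_def)

lemma is_graph_edges: "is_graph V edges"
proof -
  have "card {v, s v} = 2" "card {v, t v} = 2" if "v \<in> V" for v
    using rank_s[OF that] rank_t[OF that] by (auto simp: card_insert_if)
  then show ?thesis
    by (auto simp: is_graph_def binary_edges_def s_in t_in)
qed

lemma walk_from_root: "w \<in> V \<Longrightarrow> \<exists>xs. is_walk edges xs \<and> hd xs = r \<and> last xs = w"
proof (induction "rank w" arbitrary: w rule: less_induct)
  case less
  show ?case
  proof (cases "w = r")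
    case True
    then show ?thesis
      by (intro exI[of _ "[r]"]) (simp add: is_walk_def)
  next
    case False
    then obtain v where "child v w"
      using parent_exists[OF less.prems] by blast
    moreover obtain xs where "is_walk edges xs" "hd xs = r" "last xs = v"
      using less.hyps[of v] rank_child[OF \<open>child v w\<close>] child_in[OF \<open>child v w\<close>] by auto
    ultimately show ?thesis
      using is_walk_snoc[of edges xs w]
      by (intro exI[of _ "xs @ [w]"]) (auto simp: adj_edges_iff is_walk_def)
  qed
qed

lemma connected_graph_edges: "connected_graph V edges"
  unfolding connected_graph_def
proof (intro conjI ballI)
  fix u w assume "u \<in> V" "w \<in> V"
  obtain xs ys where "is_walk edges xs" "hd xs = r" "last xs = u"
    and "is_walk edges ys" "hd ys = r" "last ys = w"
    using walk_from_root[OF \<open>u \<in> V\<close>] walk_from_root[OF \<open>w \<in> V\<close>] by blast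
  then show "\<exists>zs. is_walk edges zs \<and> hd zs = u \<and> last zs = w"
    by (metis is_walk_between_ends)
qed (use root_in in blast)

lemma no_cycle: "\<nexists>xs. is_cycle edges xs"
proof
  \<comment> \<open>The vertex of maximal rank on a cycle would have two distinct parents.\<close>
  assume "\<exists>xs. is_cycle edges xs"
  then obtain xs where cyc: "is_cycle edges xs" ..
  then have "set xs \<noteq> {}"
    by (auto simp: is_cycle_def)
  then have "Max (rank ` set xs) \<in> rank ` set xs"
    by (intro Max_in) auto
  then obtain x where x: "x \<in> set xs" "rank x = Max (rank ` set xs)"
    by auto
  then have x_max: "rank y \<le> rank x" if "y \<in> set xs" for y
    using that by simp
  obtain y z where "y \<in> set xs" "z \<in> set xs" "y \<noteq> z" "adj edges x y" "adj edges x z"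
    using cyc x(1) by (rule is_cycle_two_neighbours)
  then have "child y x" "child z x"
    using x_max rank_child by (fastforce simp: adj_edges_iff)+
  then show False
    using parent_unique \<open>y \<noteq> z\<close> by blast
qed

lemma infinite_vertices: "infinite V"
proof
  assume "finite V"
  then have "s ` V = V"
    using inj_s s_in by (intro endo_inj_surj) auto
  then show False
    using root_in s_neq_root by force
qed

lemma neighbours_edges: "v \<in> V \<Longrightarrow> neighbours edges v = {s v, t v} \<union> {u. child u v}"
  by (auto simp: neighbours_def adj_edges_iff child_def)

lemma card_neighbours_root: "card (neighbours edges r) = 2"
  using root_in s_neq_t root_not_child by (simp add: neighbours_edges)

lemma card_neighbours_non_root:
  assumes "v \<in> V" "v \<noteq> r"
  shows "card (neighbours edges v) = 3"
proof -
  obtain u where u: "child u v"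
    using parent_exists[OF assms] by blast
  then have "{u. child u v} = {u}"
    using parent_unique by blast
  moreover have "u \<noteq> s v" "u \<noteq> t v"
    using rank_child[OF u] rank_s[OF \<open>v \<in> V\<close>] rank_t[OF \<open>v \<in> V\<close>] by auto
  ultimately show ?thesis
    using assms(1) s_neq_t by (simp add: neighbours_edges)
qed

theorem infinite_binary_tree_edges: "infinite_binary_tree V edges r"
  using is_graph_edges connected_graph_edges no_cycle infinite_vertices root_in card_neighbours_root
    card_neighbours_non_root
  by (simp add: infinite_binary_tree_def is_tree_def)

end

lemma free_binary_generation_image:
  assumes "free_binary_generation V r s t rank" "inj_on f V"
    and "\<And>v. v \<in> V \<Longrightarrow> s' (f v) = f (s v)" "\<And>v. v \<in> V \<Longrightarrow> t' (f v) = f (t v)"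
  shows "free_binary_generation (f ` V) (f r) s' t' (rank \<circ> inv_into V f)"
proof -
  interpret free_binary_generation V r s t rank
    by (fact assms(1))
  have "s ` V \<subseteq> V" "t ` V \<subseteq> V"
    using s_in t_in by auto
  then have "inj_on (f \<circ> s) V" "inj_on (f \<circ> t) V"
    using inj_s inj_t inj_on_subset[OF assms(2)] by (simp_all add: comp_inj_on)
  then have "inj_on s' (f ` V)" "inj_on t' (f ` V)"
    using assms(3,4) by (auto intro!: inj_on_imageI simp: inj_on_def)
  then show ?thesis
    using assms(2-4) root_in s_in t_in s_neq_t s_neq_root t_neq_root has_parent rank_s rank_t
    by unfold_locales (auto simp: inj_on_eq_iff[OF assms(2)])
qed

lemma degree_binom_poly [simp]: "degree (binom_poly a b) = b"
  and coeff_binom_poly_degree [simp]: "coeff (binom_poly a b) b = 1 / fact b"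
proof -
  let ?p = "\<Prod>i<b. [:of_int a - of_nat i, 1:] :: rat poly"
  have "degree ?p = b"
    by (subst degree_prod_sum_eq) auto
  moreover have "lead_coeff ?p = 1"
    by (simp add: lead_coeff_prod)
  ultimately show "degree (binom_poly a b) = b" "coeff (binom_poly a b) b = 1 / fact b"
    by (simp_all add: binom_poly_def)
qed

(* The Gotzmann sum with the index shift started at s, so that its tail is again such a sum. *)
fun shifted_gotzmann_poly :: "int \<Rightarrow> nat list \<Rightarrow> rat poly" where
  "shifted_gotzmann_poly s [] = 0"
| "shifted_gotzmann_poly s (b # bs) = binom_poly (int b - s) b + shifted_gotzmann_poly (s + 1) bs"

lemma shifted_gotzmann_poly_eq_sum:
  "shifted_gotzmann_poly s bs = (\<Sum>j<length bs. binom_poly (int (bs ! j) - (s + int j)) (bs ! j))"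
  by (induction bs arbitrary: s)
    (simp_all del: sum.lessThan_Suc add: sum.lessThan_Suc_shift algebra_simps)

lemma gotzmann_poly_eq_shifted: "gotzmann_poly bs = shifted_gotzmann_poly 0 bs"
  by (simp add: shifted_gotzmann_poly_eq_sum gotzmann_poly_def)

lemma degree_shifted_gotzmann_poly_le:
  "(\<And>x. x \<in> set bs \<Longrightarrow> x \<le> b) \<Longrightarrow> degree (shifted_gotzmann_poly s bs) \<le> b"
  by (induction bs arbitrary: s) (auto intro: degree_add_le)

lemma coeff_shifted_gotzmann_poly_at_bound:
  "(\<And>x. x \<in> set bs \<Longrightarrow> x \<le> b) \<Longrightarrow>
     coeff (shifted_gotzmann_poly s bs) b = of_nat (count_list bs b) / fact b"
proof (induction bs arbitrary: s)
  case (Cons x bs)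
  have "x \<le> b"
    using Cons.prems by simp
  then have "coeff (binom_poly (int x - s) x) b = (if x = b then 1 / fact b else 0)"
    by (simp add: coeff_eq_0)
  then show ?case
    using Cons by (simp add: add_divide_distrib)
qed simp

lemma degree_shifted_gotzmann_poly:
  assumes "bs \<noteq> []"
  shows "degree (shifted_gotzmann_poly s bs) = Max (set bs)"
proof (rule antisym)
  show "degree (shifted_gotzmann_poly s bs) \<le> Max (set bs)"
    by (rule degree_shifted_gotzmann_poly_le) simp
  have "count_list bs (Max (set bs)) \<noteq> 0"
    using assms by (simp add: count_list_0_iff)
  then have "coeff (shifted_gotzmann_poly s bs) (Max (set bs)) \<noteq> 0"
    by (subst coeff_shifted_gotzmann_poly_at_bound) simp_all
  then show "Max (set bs) \<le> degree (shifted_gotzmann_poly s bs)"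
    by (rule le_degree)
qed

lemma shifted_gotzmann_poly_eq_0_iff: "shifted_gotzmann_poly s bs = 0 \<longleftrightarrow> bs = []"
  using coeff_shifted_gotzmann_poly_at_bound[of bs "Max (set bs)" s]
  by (cases "bs = []") (auto simp: count_list_0_iff)

lemma degree_shifted_gotzmann_poly_sorted:
  assumes "sorted_wrt (\<ge>) (b # bs)"
  shows "degree (shifted_gotzmann_poly s (b # bs)) = b"
proof -
  have "Max (set (b # bs)) = b"
    using assms by (auto intro: Max_eqI)
  then show ?thesis
    by (metis degree_shifted_gotzmann_poly list.distinct(1))
qed

lemma shifted_gotzmann_poly_inject:
  "sorted_wrt (\<ge>) bs \<Longrightarrow> sorted_wrt (\<ge>) cs \<Longrightarrow>
     shifted_gotzmann_poly s bs = shifted_gotzmann_poly s cs \<Longrightarrow> bs = cs"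
proof (induction bs arbitrary: s cs)
  case Nil
  then show ?case
    by (simp add: shifted_gotzmann_poly_eq_0_iff)
next
  case (Cons b bs)
  have "cs \<noteq> []"
    using Cons.prems(3) shifted_gotzmann_poly_eq_0_iff[of s]
    by (metis list.distinct(1) shifted_gotzmann_poly.simps(1))
  then obtain c cs' where cs: "cs = c # cs'"
    by (cases cs) auto
  have "b = c"
    using arg_cong[OF Cons.prems(3), of degree] Cons.prems(1,2)
    by (simp only: cs degree_shifted_gotzmann_poly_sorted)
  with Cons show ?case
    by (simp add: cs)
qed

lemma shifted_gotzmann_poly_snoc_0:
  "shifted_gotzmann_poly s (bs @ [0]) = shifted_gotzmann_poly s bs + 1"
  by (induction bs arbitrary: s) (simp_all add: binom_poly_def)

definition gotzmann_list :: "nat list \<Rightarrow> bool" where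
  "gotzmann_list bs \<longleftrightarrow> bs \<noteq> [] \<and> sorted_wrt (\<ge>) bs"

lemma is_gotzmann_expr_iff: "is_gotzmann_expr bs P \<longleftrightarrow> gotzmann_list bs \<and> P = gotzmann_poly bs"
  by (auto simp: is_gotzmann_expr_def gotzmann_list_def)

lemma degree_gotzmann_poly: "gotzmann_list bs \<Longrightarrow> degree (gotzmann_poly bs) = hd bs"
  by (cases bs) (simp_all only: gotzmann_list_def gotzmann_poly_eq_shifted
      degree_shifted_gotzmann_poly_sorted list.sel simp_thms)

lemma inj_on_gotzmann_poly: "inj_on gotzmann_poly {bs. gotzmann_list bs}"
  by (auto intro!: inj_onI shifted_gotzmann_poly_inject simp: gotzmann_list_def gotzmann_poly_eq_shifted)

lemma the_gotzmann_expr: "is_gotzmann_expr bs P \<Longrightarrow> (THE bs. is_gotzmann_expr bs P) = bs"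
  using inj_on_gotzmann_poly by (auto simp: is_gotzmann_expr_iff dest: inj_onD)

lemma gotzmann_poly_single_0: "gotzmann_poly [0] = 1"
  by (simp add: gotzmann_poly_def binom_poly_def)

lemma sigma_hp_gotzmann_poly: "sigma_hp (gotzmann_poly bs) = gotzmann_poly (bs @ [0])"
  by (simp add: sigma_hp_def gotzmann_poly_eq_shifted shifted_gotzmann_poly_snoc_0)

lemma lambda_hp_gotzmann_poly:
  "gotzmann_list bs \<Longrightarrow> lambda_hp (gotzmann_poly bs) = gotzmann_poly (map Suc bs)"
  unfolding lambda_hp_def by (subst the_gotzmann_expr[of bs]) (simp_all add: is_gotzmann_expr_iff)

lemma last_le_if_sorted_wrt_ge: "sorted_wrt (\<ge>) bs \<Longrightarrow> x \<in> set bs \<Longrightarrow> last bs \<le> (x::nat)"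
proof (induction bs)
  case (Cons a bs)
  then show ?case
    by (cases "bs = []") (auto intro: order_trans)
qed simp

lemma gotzmann_list_parent:
  assumes "gotzmann_list bs" "bs \<noteq> [0]"
  obtains cs where "gotzmann_list cs" "bs = cs @ [0] \<or> bs = map Suc cs"
proof (cases "last bs = 0")
  case True
  then obtain cs where bs: "bs = cs @ [0]"
    using assms(1) by (metis append_butlast_last_id gotzmann_list_def)
  with assms have "gotzmann_list cs"
    by (auto simp: gotzmann_list_def sorted_wrt_append)
  with bs show thesis
    using that by blast
next
  case False
  then have "x > 0" if "x \<in> set bs" for x
    using assms(1) that last_le_if_sorted_wrt_ge[of bs x] by (auto simp: gotzmann_list_def)
  then have "bs = map Suc (map (\<lambda>x. x - 1) bs)"
    by (auto intro!: map_idI[symmetric])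
  moreover have "gotzmann_list (map (\<lambda>x. x - 1) bs)"
    using assms(1) sorted_wrt_mono_rel[of bs "(\<ge>)" "\<lambda>x y. y - 1 \<le> x - 1"]
    by (auto simp: gotzmann_list_def sorted_wrt_map)
  ultimately show thesis
    using that by blast
qed

lemma free_binary_generation_gotzmann_lists:
  "free_binary_generation {bs. gotzmann_list bs} [0] (\<lambda>bs. bs @ [0]) (map Suc)
     (\<lambda>bs. hd bs + length bs)"
proof
  show "\<exists>cs\<in>{bs. gotzmann_list bs}. bs = cs @ [0] \<or> bs = map Suc cs"
    if "bs \<in> {bs. gotzmann_list bs}" "bs \<noteq> [0]" for bs
    using that by (auto elim: gotzmann_list_parent)
  show "bs @ [0] \<noteq> map Suc cs" for bs cs
    by (metis last_map last_snoc list.map_disc_iff nat.distinct(1) snoc_eq_iff_butlast)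
qed (auto simp: gotzmann_list_def sorted_wrt_append sorted_wrt_map inj_on_def hd_map)

definition hilb_vertex :: "nat \<Rightarrow> nat list \<Rightarrow> nat \<times> rat poly" where
  "hilb_vertex c bs = (c + hd bs, gotzmann_poly bs)"

definition sigma_vertex :: "nat \<times> rat poly \<Rightarrow> nat \<times> rat poly" where
  "sigma_vertex v = (fst v, sigma_hp (snd v))"

definition lambda_vertex :: "nat \<times> rat poly \<Rightarrow> nat \<times> rat poly" where
  "lambda_vertex v = (fst v + 1, lambda_hp (snd v))"

lemma H_vertices_eq_image: "H_vertices c = hilb_vertex c ` {bs. gotzmann_list bs}"
  by (auto simp: H_vertices_def hilb_vertex_def admissible_def is_gotzmann_expr_iff
      degree_gotzmann_poly)

lemma inj_on_hilb_vertex: "inj_on (hilb_vertex c) {bs. gotzmann_list bs}"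
  using inj_on_gotzmann_poly by (auto simp: inj_on_def hilb_vertex_def)

lemma sigma_vertex_hilb_vertex:
  "gotzmann_list bs \<Longrightarrow> sigma_vertex (hilb_vertex c bs) = hilb_vertex c (bs @ [0])"
  by (simp add: sigma_vertex_def hilb_vertex_def gotzmann_list_def sigma_hp_gotzmann_poly)

lemma lambda_vertex_hilb_vertex:
  "gotzmann_list bs \<Longrightarrow> lambda_vertex (hilb_vertex c bs) = hilb_vertex c (map Suc bs)"
  by (simp add: lambda_vertex_def hilb_vertex_def gotzmann_list_def lambda_hp_gotzmann_poly hd_map)

lemma free_binary_generation_H_vertices:
  "\<exists>rank. free_binary_generation (H_vertices c) (c, 1) sigma_vertex lambda_vertex rank"
proof -
  have "free_binary_generation (hilb_vertex c ` {bs. gotzmann_list bs}) (hilb_vertex c [0])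
      sigma_vertex lambda_vertex
      ((\<lambda>bs. hd bs + length bs) \<circ> inv_into {bs. gotzmann_list bs} (hilb_vertex c))"
    using free_binary_generation_gotzmann_lists inj_on_hilb_vertex
    by (rule free_binary_generation_image)
      (simp_all add: sigma_vertex_hilb_vertex lambda_vertex_hilb_vertex)
  moreover have "hilb_vertex c [0] = (c, 1)"
    by (simp add: hilb_vertex_def gotzmann_poly_single_0)
  ultimately show ?thesis
    by (auto simp: H_vertices_eq_image)
qed

lemma H_edges_eq_binary_edges: "H_edges c = binary_edges (H_vertices c) sigma_vertex lambda_vertex"
  by (auto simp: H_edges_def binary_edges_def H_vertices_def sigma_vertex_def
      lambda_vertex_def)

theorem theorem4p1:
  fixes c :: nat
  assumes "c \<ge> 1"
  shows "infinite_binary_tree (H_vertices c) (H_edges c) (c, 1)"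
proof -
  obtain rank where "free_binary_generation (H_vertices c) (c, 1) sigma_vertex lambda_vertex rank"
    using free_binary_generation_H_vertices by blast
  then show ?thesis
    unfolding H_edges_eq_binary_edges by (rule free_binary_generation.infinite_binary_tree_edges)
qed

end
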